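(* Let $N\in\mathbb{N}$ and $X_1,X_2\subseteq[N]$ with $|X_1|\cdot|X_2|=N$, $X=(X_1,X_2)$, and let $\mu=\mathbb{E}_{\sigma\sim\mathcal D_X}[|X_\sigma|]$. Then for every real $u\ge 6\mu$, $$\Pr_{\pi\sim\mathcal D_X}\big[|X_\pi|\ge \mu+u\big]\le 3\exp\!\left(-\tfrac{4u}{9}\right).$$
   Context: For $\pi\in S_N$, $X_\pi=\{(i,j): i\in X_1,\ j\in X_2,\ \pi(i)=j\}$ is the set of $X$-pairs of $\pi$. The distribution $\mathcal{D}_X$ on $S_N$ is defined by $\Pr_{\Phi\sim\mathcal D_X}[\Phi=\varphi]=|X_\varphi|/\sum_{\sigma\in S_N}|X_\sigma|$ for $\varphi\in S_N$. *)

theory Defs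
  imports "HOL-Analysis.Analysis" "HOL-Combinatorics.Permutations"
begin

definition SN :: "nat \<Rightarrow> (nat \<Rightarrow> nat) set" where
  "SN N = {p. p permutes {1..N}}"

definition Xpairs :: "nat set \<Rightarrow> nat set \<Rightarrow> (nat \<Rightarrow> nat) \<Rightarrow> (nat \<times> nat) set" where
  "Xpairs X1 X2 p = {(i, j). i \<in> X1 \<and> j \<in> X2 \<and> p i = j}"

definition DX :: "nat \<Rightarrow> nat set \<Rightarrow> nat set \<Rightarrow> (nat \<Rightarrow> nat) \<Rightarrow> real" where
  "DX N X1 X2 \<phi> = real (card (Xpairs X1 X2 \<phi>)) /
      (\<Sum>\<sigma>\<in>SN N. real (card (Xpairs X1 X2 \<sigma>)))"

definition DX_prob :: "nat \<Rightarrow> nat set \<Rightarrow> nat set \<Rightarrow> ((nat \<Rightarrow> nat) \<Rightarrow> bool) \<Rightarrow> real" where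
  "DX_prob N X1 X2 P = (\<Sum>\<pi>\<in>{\<pi>\<in>SN N. P \<pi>}. DX N X1 X2 \<pi>)"

definition DX_expect :: "nat \<Rightarrow> nat set \<Rightarrow> nat set \<Rightarrow> ((nat \<Rightarrow> nat) \<Rightarrow> real) \<Rightarrow> real" where
  "DX_expect N X1 X2 f = (\<Sum>\<sigma>\<in>SN N. DX N X1 X2 \<sigma> * f \<sigma>)"

end

theory Submission
  imports Defs
begin

text \<open>Under D_X an event E has probability (\<Sum>\<pi>\<in>E. |X_\<pi>|) / (\<Sum>\<sigma>. |X_\<sigma>|), and the normaliser is N!.
  Double counting the pairs (\<pi>, A) with A a k-subset of X1 and \<pi> ` A \<subseteq> X2 gives
  \<Sum>\<pi>. C(|X_\<pi>|, k) \<cdot> C(N, k) = C(|X1|, k) \<cdot> C(|X2|, k) \<cdot> N!, and C(a, s) \<cdot> C(b, s) \<cdot> s! \<le> C(ab, s)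
  turns this into \<Sum>\<pi>. C(|X_\<pi>|, s) \<cdot> s! \<le> N!. As x \<le> s \<cdot> C(x, s) for x \<ge> s, the permutations with
  |X_\<pi>| \<ge> s carry mass at most 1/(s-1)! \<le> 3 exp(-4s/9); take s = \<lceil>\<mu> + u\<rceil>.\<close>

lemma exists_permutes_image:
  assumes "finite S" "C \<subseteq> S" "D \<subseteq> S" "card C = card D"
  shows "\<exists>\<sigma>. \<sigma> permutes S \<and> \<sigma> ` C = D"
proof -
  have "finite C" "finite D" using assms finite_subset by auto
  then obtain g where g: "bij_betw g C D" using finite_same_card_bij assms(4) by blast
  have "card (S - C) = card (S - D)"
    using assms \<open>finite C\<close> \<open>finite D\<close> by (simp add: card_Diff_subset)
  then obtain h where h: "bij_betw h (S - C) (S - D)"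
    using finite_same_card_bij[of "S - C" "S - D"] assms(1) by auto
  define \<sigma> where "\<sigma> x = (if x \<in> C then g x else if x \<in> S then h x else x)" for x
  have on_C: "bij_betw \<sigma> C D"
    using g by (rule bij_betw_cong[THEN iffD1, rotated]) (simp add: \<sigma>_def)
  have "bij_betw \<sigma> (S - C) (S - D)"
    using h by (rule bij_betw_cong[THEN iffD1, rotated]) (simp add: \<sigma>_def)
  with on_C have "bij_betw \<sigma> (C \<union> (S - C)) (D \<union> (S - D))"
    by (rule bij_betw_combine) auto
  moreover have "C \<union> (S - C) = S" "D \<union> (S - D) = S" using assms by auto
  ultimately have "\<sigma> permutes S"
    by (intro bij_imp_permutes) (auto simp: \<sigma>_def)
  with on_C show ?thesis by (auto simp: bij_betw_def)
qed

text \<open>All fibres of p \<mapsto> p ` A over the card A-subsets of S have the same size, since composing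
  with a permutation maps one fibre injectively into another.\<close>
lemma card_permutes_image_eq:
  assumes "finite S" "A \<subseteq> S" "C \<subseteq> S" "card C = card A"
  shows "card {p. p permutes S \<and> p ` A = C} * (card S choose card A) = fact (card S)"
proof -
  define F where "F C = {p. p permutes S \<and> p ` A = C}" for C
  define Q where "Q = {B. B \<subseteq> S \<and> card B = card A}"
  have fin_F: "finite (F B)" for B
    using finite_permutations[OF assms(1)] by (rule finite_subset[rotated]) (auto simp: F_def)
  have fibre_le: "card (F B) \<le> card (F B')" if "B \<in> Q" "B' \<in> Q" for B B'
  proof -
    have "\<exists>\<sigma>. \<sigma> permutes S \<and> \<sigma> ` B = B'"
      using that assms(1) by (intro exists_permutes_image) (auto simp: Q_def)
    then obtain \<sigma> where \<sigma>: "\<sigma> permutes S" "\<sigma> ` B = B'" by blast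
    have "inj_on ((\<circ>) \<sigma>) (F B)"
      using permutes_inj[OF \<sigma>(1)] by (auto intro!: inj_onI simp: fun_eq_iff inj_eq)
    moreover have "(\<circ>) \<sigma> ` F B \<subseteq> F B'"
      using \<sigma> by (auto simp: F_def image_comp[symmetric] intro: permutes_compose)
    ultimately show ?thesis using fin_F by (rule card_inj_on_le)
  qed
  have "{p. p permutes S} = (\<Union>B\<in>Q. F B)"
    using assms(2)
    by (auto simp: F_def Q_def permutes_in_image card_image[OF permutes_inj_on]) blast
  then have "fact (card S) = card (\<Union>B\<in>Q. F B)"
    using card_permutations[OF refl assms(1)] by simp
  also have "\<dots> = (\<Sum>B\<in>Q. card (F B))"
    using assms(1) fin_F by (intro card_UN_disjoint) (auto simp: Q_def F_def)
  also have "\<dots> = (\<Sum>B\<in>Q. card (F C))"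
    using fibre_le assms(3,4) by (intro sum.cong refl antisym) (auto simp: Q_def)
  also have "\<dots> = card (F C) * (card S choose card A)"
    using n_subsets[OF assms(1)] by (simp add: Q_def)
  finally show ?thesis by (simp add: F_def)
qed

lemma card_permutes_image_subset:
  assumes "finite S" "A \<subseteq> S" "T \<subseteq> S"
  shows "card {p. p permutes S \<and> p ` A \<subseteq> T} * (card S choose card A)
       = (card T choose card A) * fact (card S)"
proof -
  define F where "F C = {p. p permutes S \<and> p ` A = C}" for C
  define Q where "Q = {C. C \<subseteq> T \<and> card C = card A}"
  have "finite T" using assms(1,3) by (rule finite_subset[rotated])
  have fin_F: "finite (F C)" for C
    using finite_permutations[OF assms(1)] by (rule finite_subset[rotated]) (auto simp: F_def)
  have eq: "{p. p permutes S \<and> p ` A \<subseteq> T} = (\<Union>C\<in>Q. F C)"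
    by (auto simp: F_def Q_def card_image[OF permutes_inj_on])
  have "card {p. p permutes S \<and> p ` A \<subseteq> T} = (\<Sum>C\<in>Q. card (F C))"
    unfolding eq using \<open>finite T\<close> fin_F by (intro card_UN_disjoint) (auto simp: Q_def F_def)
  also have "\<dots> * (card S choose card A) = (\<Sum>C\<in>Q. fact (card S))"
    unfolding sum_distrib_right F_def using assms
    by (intro sum.cong refl card_permutes_image_eq) (auto simp: Q_def)
  also have "\<dots> = (card T choose card A) * fact (card S)"
    using n_subsets[OF \<open>finite T\<close>] by (simp add: Q_def)
  finally show ?thesis .
qed

lemma card_Xpairs:
  assumes "finite X1"
  shows "card (Xpairs X1 X2 p) = card {i\<in>X1. p i \<in> X2}"
proof -
  have "Xpairs X1 X2 p = (\<lambda>i. (i, p i)) ` {i\<in>X1. p i \<in> X2}" by (auto simp: Xpairs_def)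
  then show ?thesis by (simp add: card_image inj_on_def)
qed

lemma card_Xpairs_choose:
  assumes "finite X1"
  shows "card (Xpairs X1 X2 p) choose k = card {A. A \<subseteq> X1 \<and> card A = k \<and> p ` A \<subseteq> X2}"
proof -
  have "{A. A \<subseteq> X1 \<and> card A = k \<and> p ` A \<subseteq> X2} = {A. A \<subseteq> {i\<in>X1. p i \<in> X2} \<and> card A = k}"
    by auto
  then show ?thesis using n_subsets[of "{i\<in>X1. p i \<in> X2}" k] assms by (simp add: card_Xpairs)
qed

lemma sum_card_filter_swap:
  assumes "finite P" "finite Q"
  shows "(\<Sum>p\<in>P. card {a\<in>Q. R p a}) = (\<Sum>a\<in>Q. card {p\<in>P. R p a})"
  using sum.swap_restrict[OF assms, of "\<lambda>_ _. 1 :: nat" R] by simp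

lemma sum_permutes_card_Xpairs_choose:
  assumes "finite S" "X1 \<subseteq> S" "X2 \<subseteq> S"
  shows "(\<Sum>p\<in>{p. p permutes S}. card (Xpairs X1 X2 p) choose k) * (card S choose k)
       = (card X1 choose k) * (card X2 choose k) * fact (card S)"
proof -
  define Q where "Q = {A. A \<subseteq> X1 \<and> card A = k}"
  have "finite X1" using assms(1,2) by (rule finite_subset[rotated])
  then have "finite Q" by (simp add: Q_def)
  have "(\<Sum>p\<in>{p. p permutes S}. card (Xpairs X1 X2 p) choose k)
      = (\<Sum>p\<in>{p. p permutes S}. card {A\<in>Q. p ` A \<subseteq> X2})"
    using \<open>finite X1\<close> by (simp add: card_Xpairs_choose Q_def)
  also have "\<dots> = (\<Sum>A\<in>Q. card {p. p permutes S \<and> p ` A \<subseteq> X2})"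
    using sum_card_filter_swap[OF finite_permutations[OF assms(1)] \<open>finite Q\<close>] by simp
  also have "\<dots> * (card S choose k) = (\<Sum>A\<in>Q. (card X2 choose k) * fact (card S))"
    unfolding sum_distrib_right using assms
    by (intro sum.cong refl) (auto simp: Q_def card_permutes_image_subset[symmetric])
  also have "\<dots> = (card X1 choose k) * (card X2 choose k) * fact (card S)"
    using n_subsets[OF \<open>finite X1\<close>] by (simp add: Q_def)
  finally show ?thesis .
qed

lemma choose_mult_choose_mult_fact_le:
  fixes a b s :: nat
  shows "(a choose s) * (b choose s) * fact s \<le> (a * b choose s)"
proof (induction s)
  case 0
  then show ?case by simp
next
  case (Suc s)
  have absorb: "Suc s * (n choose Suc s) = (n - s) * (n choose s)" for n
    using binomial_absorption[of s n] binomial_absorb_comp[of n s] by simp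
  have "(a - s) * (b - s) \<le> (a - s) * b" by simp
  also have "\<dots> \<le> a * b - s"
    by (cases "b = 0") (auto simp: diff_mult_distrib intro: diff_le_mono2)
  finally have factor_le: "(a - s) * (b - s) \<le> a * b - s" .
  have "Suc s * ((a choose Suc s) * (b choose Suc s) * fact (Suc s))
      = (Suc s * (a choose Suc s)) * (Suc s * (b choose Suc s)) * fact s"
    by (simp add: algebra_simps)
  also have "\<dots> = ((a - s) * (b - s)) * ((a choose s) * (b choose s) * fact s)"
    by (simp only: absorb) (simp add: algebra_simps)
  also have "\<dots> \<le> (a * b - s) * (a * b choose s)"
    by (rule mult_le_mono[OF factor_le Suc.IH])
  also have "\<dots> = Suc s * (a * b choose Suc s)" by (simp only: absorb)
  finally show ?case by (rule Suc_mult_le_cancel1[THEN iffD1])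
qed

lemma le_mult_choose:
  fixes k s :: nat
  assumes "s \<noteq> 0" "s \<le> k"
  shows "k \<le> s * (k choose s)"
proof -
  have "0 < k - 1 choose (s - 1)" using assms by (intro zero_less_binomial) simp
  then have "k \<le> k * (k - 1 choose (s - 1))" by (simp del: zero_less_binomial_iff)
  also have "\<dots> = s * (k choose s)"
    using times_binomial_minus1_eq[of s k] assms(1) by simp
  finally show ?thesis .
qed

lemma sum_filter_ge_mult_fact_le:
  fixes K :: "'a \<Rightarrow> nat"
  assumes "finite P" "s \<noteq> 0"
  shows "(\<Sum>p\<in>{p\<in>P. s \<le> K p}. K p) * fact (s - 1) \<le> (\<Sum>p\<in>P. K p choose s) * fact s"
proof -
  have "(\<Sum>p\<in>{p\<in>P. s \<le> K p}. K p) \<le> (\<Sum>p\<in>{p\<in>P. s \<le> K p}. s * (K p choose s))"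
    using le_mult_choose[OF assms(2)] by (intro sum_mono) auto
  also have "\<dots> \<le> (\<Sum>p\<in>P. s * (K p choose s))"
    using assms(1) by (intro sum_mono2) auto
  also have "\<dots> = s * (\<Sum>p\<in>P. K p choose s)" by (simp add: sum_distrib_left)
  finally have "(\<Sum>p\<in>{p\<in>P. s \<le> K p}. K p) * fact (s - 1)
      \<le> s * (\<Sum>p\<in>P. K p choose s) * fact (s - 1)"
    by (rule mult_le_mono1)
  also have "\<dots> = (\<Sum>p\<in>P. K p choose s) * fact s"
    using assms(2) by (cases s) (simp_all add: algebra_simps)
  finally show ?thesis .
qed

lemma exp_le_3_fact: "exp (4 * real (Suc m) / 9) \<le> 3 * fact m"
proof (induction m)
  case 0
  have "exp (4 / 9 :: real) \<le> exp 1" by simp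
  with exp_le have "exp (4 / 9 :: real) \<le> 3" by linarith
  then show ?case by simp
next
  case (Suc m)
  show ?case
  proof (cases "m = 0")
    case True
    have "exp (8 / 9 :: real) \<le> exp 1" by simp
    with exp_le have "exp (8 / 9 :: real) \<le> 3" by linarith
    with True show ?thesis by simp
  next
    case False
    have "exp (4 / 9 :: real) \<le> exp (1 / 2)" by simp
    with exp_half_le2 have step: "exp (4 / 9 :: real) \<le> real (Suc m)"
      using False by linarith
    have "exp (4 * real (Suc (Suc m)) / 9) = exp (4 * real (Suc m) / 9) * exp (4 / 9)"
      by (simp add: exp_add[symmetric] field_simps)
    also have "\<dots> \<le> 3 * fact m * real (Suc m)"
      using Suc.IH step by (intro mult_mono) auto
    also have "\<dots> = 3 * fact (Suc m)" by simp
    finally show ?thesis .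
  qed
qed

lemma inverse_fact_le_exp:
  assumes "s \<noteq> 0" "u \<le> real s"
  shows "1 / fact (s - 1) \<le> 3 * exp (- (4 * u / 9))"
proof -
  have "exp (4 * u / 9) \<le> exp (4 * real (Suc (s - 1)) / 9)"
    using assms by simp
  also have "\<dots> \<le> 3 * fact (s - 1)" by (rule exp_le_3_fact)
  finally show ?thesis by (simp add: exp_minus field_simps)
qed

lemma finite_SN: "finite (SN N)"
  by (simp add: SN_def finite_permutations)

lemma sum_card_Xpairs_choose_SN:
  assumes "X1 \<subseteq> {1..N}" "X2 \<subseteq> {1..N}"
  shows "(\<Sum>p\<in>SN N. card (Xpairs X1 X2 p) choose k) * (N choose k)
       = (card X1 choose k) * (card X2 choose k) * fact N"
  using sum_permutes_card_Xpairs_choose[OF _ assms] by (simp add: SN_def)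

lemma sum_card_Xpairs_SN:
  assumes "X1 \<subseteq> {1..N}" "X2 \<subseteq> {1..N}" "card X1 * card X2 = N" "N \<noteq> 0"
  shows "(\<Sum>p\<in>SN N. card (Xpairs X1 X2 p)) = fact N"
  using sum_card_Xpairs_choose_SN[OF assms(1,2), of 1] assms(3,4) by simp

lemma sum_card_Xpairs_choose_SN_le:
  assumes "X1 \<subseteq> {1..N}" "X2 \<subseteq> {1..N}" "card X1 * card X2 = N"
  shows "(\<Sum>p\<in>SN N. card (Xpairs X1 X2 p) choose s) * fact s \<le> fact N"
proof (cases "s \<le> N")
  case True
  have "(\<Sum>p\<in>SN N. card (Xpairs X1 X2 p) choose s) * fact s * (N choose s)
      = (card X1 choose s) * (card X2 choose s) * fact s * fact N"
    using sum_card_Xpairs_choose_SN[OF assms(1,2), of s] by (simp add: mult_ac)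
  also have "\<dots> \<le> (N choose s) * fact N"
    using choose_mult_choose_mult_fact_le[where a = "card X1" and b = "card X2" and s = s] assms(3)
    by (intro mult_le_mono1) simp
  finally show ?thesis
    using True by (simp add: mult.commute[of "N choose s"])
next
  case False
  have "card (Xpairs X1 X2 p) < s" for p
  proof -
    have "finite X1" using assms(1) by (rule finite_subset) simp
    then have "card (Xpairs X1 X2 p) \<le> card X1"
      by (auto simp: card_Xpairs intro: card_mono)
    also have "\<dots> \<le> N" using card_mono[OF _ assms(1)] by simp
    finally show ?thesis using False by simp
  qed
  then show ?thesis by (simp add: binomial_eq_0)
qed

lemma DX_nonneg: "DX N X1 X2 \<phi> \<ge> 0"
  by (simp add: DX_def sum_nonneg)

lemma DX_prob_le_1: "DX_prob N X1 X2 P \<le> 1"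
proof -
  have "DX_prob N X1 X2 P \<le> (\<Sum>\<pi>\<in>SN N. DX N X1 X2 \<pi>)"
    unfolding DX_prob_def using finite_SN DX_nonneg by (intro sum_mono2) auto
  also have "\<dots> \<le> 1"
    by (simp add: DX_def sum_divide_distrib[symmetric] divide_le_eq_1)
  finally show ?thesis .
qed

lemma DX_expect_nonneg:
  assumes "\<And>\<sigma>. f \<sigma> \<ge> 0"
  shows "DX_expect N X1 X2 f \<ge> 0"
  unfolding DX_expect_def using assms DX_nonneg by (intro sum_nonneg mult_nonneg_nonneg)

lemma DX_prob_card_Xpairs_ge:
  assumes "X1 \<subseteq> {1..N}" "X2 \<subseteq> {1..N}" "card X1 * card X2 = N" "s \<noteq> 0"
  shows "DX_prob N X1 X2 (\<lambda>\<pi>. s \<le> card (Xpairs X1 X2 \<pi>)) \<le> 1 / fact (s - 1)"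
proof (cases "N = 0")
  case True
  with assms(1,4) show ?thesis by (simp add: DX_prob_def Xpairs_def)
next
  case False
  let ?K = "\<lambda>\<pi>. card (Xpairs X1 X2 \<pi>)"
  have "DX_prob N X1 X2 (\<lambda>\<pi>. s \<le> ?K \<pi>) = real (\<Sum>\<pi>\<in>{\<pi>\<in>SN N. s \<le> ?K \<pi>}. ?K \<pi>) / fact N"
    using sum_card_Xpairs_SN[OF assms(1-3) False]
    by (simp add: DX_prob_def DX_def sum_divide_distrib[symmetric] flip: of_nat_sum)
  also have "\<dots> \<le> 1 / fact (s - 1)"
  proof -
    have "(\<Sum>\<pi>\<in>{\<pi>\<in>SN N. s \<le> ?K \<pi>}. ?K \<pi>) * fact (s - 1) \<le> fact N"
      using sum_filter_ge_mult_fact_le[OF finite_SN[of N] assms(4), of ?K]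
        sum_card_Xpairs_choose_SN_le[OF assms(1-3), of s] by linarith
    then have "real (\<Sum>\<pi>\<in>{\<pi>\<in>SN N. s \<le> ?K \<pi>}. ?K \<pi>) * fact (s - 1) \<le> fact N"
      by (metis of_nat_fact of_nat_le_iff of_nat_mult)
    then show ?thesis by (simp add: field_simps)
  qed
  finally show ?thesis .
qed

theorem theorem3:
  fixes N :: nat and X1 X2 :: "nat set" and u :: real
  assumes "X1 \<subseteq> {1..N}" and "X2 \<subseteq> {1..N}"
    and "card X1 * card X2 = N"
    and "u \<ge> 6 * DX_expect N X1 X2 (\<lambda>\<sigma>. real (card (Xpairs X1 X2 \<sigma>)))"
  shows "DX_prob N X1 X2 (\<lambda>\<pi>. real (card (Xpairs X1 X2 \<pi>)) \<ge>
            DX_expect N X1 X2 (\<lambda>\<sigma>. real (card (Xpairs X1 X2 \<sigma>))) + u)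
         \<le> 3 * exp (- (4 * u / 9))"
proof -
  define \<mu> where "\<mu> = DX_expect N X1 X2 (\<lambda>\<sigma>. real (card (Xpairs X1 X2 \<sigma>)))"
  have "\<mu> \<ge> 0" unfolding \<mu>_def by (rule DX_expect_nonneg) simp
  with assms(4) have "u \<ge> 0" unfolding \<mu>_def by linarith
  have "DX_prob N X1 X2 (\<lambda>\<pi>. \<mu> + u \<le> real (card (Xpairs X1 X2 \<pi>))) \<le> 3 * exp (- (4 * u / 9))"
  proof (cases "u = 0")
    case True
    have "DX_prob N X1 X2 P \<le> 3" for P using DX_prob_le_1[of N X1 X2 P] by linarith
    with True show ?thesis by simp
  next
    case False
    define s where "s = nat \<lceil>\<mu> + u\<rceil>"
    have "s \<noteq> 0" using \<open>\<mu> \<ge> 0\<close> \<open>u \<ge> 0\<close> False by (simp add: s_def)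
    have "u \<le> real s" using \<open>\<mu> \<ge> 0\<close> by (simp add: s_def) linarith
    have "DX_prob N X1 X2 (\<lambda>\<pi>. \<mu> + u \<le> real (card (Xpairs X1 X2 \<pi>)))
        = DX_prob N X1 X2 (\<lambda>\<pi>. s \<le> card (Xpairs X1 X2 \<pi>))"
      by (simp add: DX_prob_def s_def nat_ceiling_le_eq)
    also have "\<dots> \<le> 1 / fact (s - 1)"
      by (rule DX_prob_card_Xpairs_ge[OF assms(1-3) \<open>s \<noteq> 0\<close>])
    also have "\<dots> \<le> 3 * exp (- (4 * u / 9))"
      by (rule inverse_fact_le_exp[OF \<open>s \<noteq> 0\<close> \<open>u \<le> real s\<close>])
    finally show ?thesis .
  qed
  then show ?thesis by (simp add: \<mu>_def)
qed

end
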